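(* Let $X$ be a polyhedral normed space and $f: X\to X$ nonexpansive and real analytic. Let $E\subseteq B_{X^*}$. If there exist $v,w\in S_E(f)$ such that $J(v-w)=E$, then $w+L_E\subseteq S_E(f)$.
   Context: A polyhedral normed space is a finite-dimensional real normed space whose closed unit ball has finitely many extreme points; $B_{X^*}$ is the closed unit ball of the dual space. Nonexpansive: $\|f(x)-f(y)\|\le\|x-y\|$ for all $x,y$. Real analytic: locally given by a convergent power series. The duality map is $J(x)=\{\phi\in B_{X^*}: \phi(x)=\|x\|\}$. For $E\subseteq B_{X^*}$: $S_E(f)=\{x\in X: \phi(f(x))=\phi(x)\text{ for all }\phi\in E\}$ and $L_E=\{x\in X: \phi(x)=\psi(x)\text{ for all }\phi,\psi\in E\}$. *)

theory Defs
  imports "HOL-Analysis.Analysis"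
begin

text \<open>The normed space X is modelled as the vector space real^'n (any finite
dimension n >= 1) equipped with an arbitrary norm N (not necessarily the
Euclidean one).\<close>

definition is_norm :: "('a::real_vector \<Rightarrow> real) \<Rightarrow> bool" where
  "is_norm N \<longleftrightarrow> (\<forall>x. N x = 0 \<longleftrightarrow> x = 0) \<and> (\<forall>c x. N (c *\<^sub>R x) = \<bar>c\<bar> * N x)
     \<and> (\<forall>x y. N (x + y) \<le> N x + N y)"

definition polyhedral_norm :: "('a::real_vector \<Rightarrow> real) \<Rightarrow> bool" where
  "polyhedral_norm N \<longleftrightarrow> is_norm N \<and> finite {x. x extreme_point_of {y. N y \<le> 1}}"

definition dual_ball :: "('a::real_vector \<Rightarrow> real) \<Rightarrow> ('a \<Rightarrow> real) set" where
  "dual_ball N = {\<phi>. linear \<phi> \<and> (\<forall>x. \<bar>\<phi> x\<bar> \<le> N x)}"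

definition nonexpansive :: "('a::real_vector \<Rightarrow> real) \<Rightarrow> ('a \<Rightarrow> 'a) \<Rightarrow> bool" where
  "nonexpansive N f \<longleftrightarrow> (\<forall>x y. N (f x - f y) \<le> N (x - y))"

definition real_analytic :: "(real^'n \<Rightarrow> real^'n) \<Rightarrow> bool" where
  "real_analytic f \<longleftrightarrow> (\<forall>x0. \<exists>r>0. \<exists>c :: ('n \<Rightarrow> nat) \<Rightarrow> real^'n.
     \<forall>y. dist y x0 < r \<longrightarrow>
       ((\<lambda>\<alpha>. (\<Prod>i\<in>UNIV. (y$i - x0$i) ^ \<alpha> i) *\<^sub>R c \<alpha>) has_sum f y) UNIV)"

definition duality_map :: "('a::real_vector \<Rightarrow> real) \<Rightarrow> 'a \<Rightarrow> ('a \<Rightarrow> real) set" where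
  "duality_map N x = {\<phi> \<in> dual_ball N. \<phi> x = N x}"

definition S_set :: "('a \<Rightarrow> real) set \<Rightarrow> ('a \<Rightarrow> 'a) \<Rightarrow> 'a set" where
  "S_set E f = {x. \<forall>\<phi>\<in>E. \<phi> (f x) = \<phi> x}"

definition L_set :: "('a \<Rightarrow> real) set \<Rightarrow> 'a set" where
  "L_set E = {x. \<forall>\<phi>\<in>E. \<forall>\<psi>\<in>E. \<phi> x = \<psi> x}"

end

theory Submission
  imports Defs "HOL-Complex_Analysis.Complex_Analysis"
begin

text \<open>Write \<open>u = v - w\<close>. A polyhedral norm has a finite set of functionals in the dual
  ball attaining it everywhere, so the duality map is locally stable: for small \<open>h\<close> some
  functional of \<open>J(u)\<close> still attains the norm at \<open>u + h\<close>. If \<open>l \<in> L\<^sub>E\<close> is small and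
  \<open>x\<close> is the midpoint of \<open>w\<close> and \<open>v\<close> shifted by \<open>l\<close>, then every \<open>\<phi> \<in> E\<close> attains the norm on
  both \<open>x - w\<close> and \<open>v - x\<close>, and nonexpansiveness squeezes \<open>\<phi> (f x)\<close> to \<open>\<phi> x\<close>. Along each
  line through the midpoint in a direction of \<open>L\<^sub>E\<close>, \<open>\<phi> \<circ> f - \<phi>\<close> is real analytic and
  vanishes near the midpoint, hence everywhere by the identity theorem.\<close>

section \<open>Norms on finite-dimensional spaces\<close>

lemma is_norm_eq_0_iff: "is_norm N \<Longrightarrow> N x = 0 \<longleftrightarrow> x = 0"
  unfolding is_norm_def by auto

lemma is_norm_scaleR: "is_norm N \<Longrightarrow> N (c *\<^sub>R x) = \<bar>c\<bar> * N x"
  unfolding is_norm_def by auto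

lemma is_norm_triangle: "is_norm N \<Longrightarrow> N (x + y) \<le> N x + N y"
  unfolding is_norm_def by auto

lemma is_norm_zero: "is_norm N \<Longrightarrow> N 0 = 0"
  by (simp add: is_norm_eq_0_iff)

lemma is_norm_minus: "is_norm N \<Longrightarrow> N (- x) = N x"
  using is_norm_scaleR[of N "-1" x] by simp

lemma is_norm_nonneg: "is_norm N \<Longrightarrow> 0 \<le> N x"
  using is_norm_triangle[of N x "- x"] by (simp add: is_norm_zero is_norm_minus)

lemma is_norm_pos: "is_norm N \<Longrightarrow> x \<noteq> 0 \<Longrightarrow> 0 < N x"
  using is_norm_nonneg is_norm_eq_0_iff by (metis less_eq_real_def)

lemma is_norm_diff_le: "is_norm N \<Longrightarrow> N x - N y \<le> N (x - y)"
  using is_norm_triangle[of N "x - y" y] by simp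

lemma is_norm_normalize: "is_norm N \<Longrightarrow> x \<noteq> 0 \<Longrightarrow> N (x /\<^sub>R N x) = 1"
  using is_norm_scaleR[of N "inverse (N x)" x] is_norm_pos[of N x] by simp

lemma is_norm_scaleR_small:
  assumes N: "is_norm N" and "\<delta> > 0"
  shows "\<exists>\<epsilon>>0. \<forall>s. \<bar>s\<bar> < \<epsilon> \<longrightarrow> N (s *\<^sub>R x) < \<delta>"
proof (intro exI conjI allI impI)
  show "\<delta> / (N x + 1) > 0"
    using \<open>\<delta> > 0\<close> is_norm_nonneg[OF N, of x] by (simp add: add_nonneg_pos)
  fix s assume s: "\<bar>s\<bar> < \<delta> / (N x + 1)"
  have "N (s *\<^sub>R x) = \<bar>s\<bar> * N x"
    by (rule is_norm_scaleR[OF N])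
  also have "\<dots> \<le> \<bar>s\<bar> * (N x + 1)"
    by (simp add: mult_left_mono)
  also have "\<dots> < \<delta>"
    using s is_norm_nonneg[OF N, of x] by (simp add: pos_less_divide_eq add_nonneg_pos)
  finally show "N (s *\<^sub>R x) < \<delta>" .
qed

lemma is_norm_sum_le:
  assumes "is_norm N"
  shows "N (sum g A) \<le> (\<Sum>a\<in>A. N (g a))"
proof (induction A rule: infinite_finite_induct)
  case (insert a A)
  then show ?case using is_norm_triangle[OF assms, of "g a" "sum g A"] by simp
qed (simp_all add: is_norm_zero[OF assms])

lemma is_norm_le_mult_norm:
  fixes N :: "'a::euclidean_space \<Rightarrow> real"
  assumes "is_norm N"
  shows "\<exists>C>0. \<forall>x. N x \<le> C * norm x"
proof (intro exI conjI allI)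
  define C where "C = 1 + (\<Sum>b\<in>Basis. N b)"
  show "C > 0"
    unfolding C_def using is_norm_nonneg[OF assms] by (simp add: add_pos_nonneg sum_nonneg)
  fix x :: 'a
  have "N x = N (\<Sum>b\<in>Basis. (x \<bullet> b) *\<^sub>R b)"
    by (simp add: euclidean_representation)
  also have "\<dots> \<le> (\<Sum>b\<in>Basis. N ((x \<bullet> b) *\<^sub>R b))"
    by (rule is_norm_sum_le[OF assms])
  also have "\<dots> = (\<Sum>b\<in>Basis. \<bar>x \<bullet> b\<bar> * N b)"
    by (simp add: is_norm_scaleR[OF assms])
  also have "\<dots> \<le> (\<Sum>b\<in>Basis. norm x * N b)"
    by (intro sum_mono mult_right_mono is_norm_nonneg[OF assms]) (simp add: Basis_le_norm)
  also have "\<dots> = norm x * (\<Sum>b\<in>Basis. N b)"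
    by (rule sum_distrib_left[symmetric])
  also have "\<dots> \<le> C * norm x"
    by (simp add: C_def algebra_simps)
  finally show "N x \<le> C * norm x" .
qed

lemma is_norm_continuous_on:
  fixes N :: "'a::euclidean_space \<Rightarrow> real"
  assumes "is_norm N"
  shows "continuous_on S N"
proof -
  obtain C where "C > 0" and C: "\<And>x. N x \<le> C * norm x"
    using is_norm_le_mult_norm[OF assms] by blast
  have "\<bar>N x - N y\<bar> \<le> C * dist x y" for x y
    using is_norm_diff_le[OF assms, of x y] is_norm_diff_le[OF assms, of y x]
      C[of "x - y"] C[of "y - x"] by (simp add: dist_norm norm_minus_commute abs_le_iff)
  then have "C-lipschitz_on S N"
    by (intro lipschitz_onI) (simp_all add: dist_real_def less_imp_le[OF \<open>C > 0\<close>])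
  then show ?thesis
    by (rule lipschitz_on_continuous_on)
qed

lemma is_norm_ge_mult_norm:
  fixes N :: "'a::euclidean_space \<Rightarrow> real"
  assumes "is_norm N"
  shows "\<exists>c>0. \<forall>x. c * norm x \<le> N x"
proof -
  obtain b :: 'a where "b \<in> Basis"
    using nonempty_Basis by blast
  then have "sphere (0::'a) 1 \<noteq> {}"
    by (auto intro!: exI[of _ b])
  then obtain x0 where x0: "x0 \<in> sphere 0 1" and min: "\<And>y. y \<in> sphere 0 1 \<Longrightarrow> N x0 \<le> N y"
    using continuous_attains_inf[OF compact_sphere _ is_norm_continuous_on[OF assms]] by blast
  have "N x0 * norm x \<le> N x" for x
  proof (cases "x = 0")
    case False
    have "N x0 \<le> N (x /\<^sub>R norm x)"
      using min[of "x /\<^sub>R norm x"] False by simp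
    then show ?thesis
      using False by (simp add: is_norm_scaleR[OF assms] field_simps)
  qed (simp add: is_norm_zero[OF assms])
  moreover have "N x0 > 0"
    using x0 by (intro is_norm_pos[OF assms]) auto
  ultimately show ?thesis by blast
qed

lemma is_norm_unit_ball:
  fixes N :: "'a::euclidean_space \<Rightarrow> real"
  assumes "is_norm N"
  shows "compact {y. N y \<le> 1}" and "convex {y. N y \<le> 1}"
proof -
  obtain c where "c > 0" and c: "\<And>x. c * norm x \<le> N x"
    using is_norm_ge_mult_norm[OF assms] by blast
  have "bounded {y. N y \<le> 1}"
    unfolding bounded_iff using c \<open>c > 0\<close> by (metis dual_order.trans mem_Collect_eq pos_le_divide_eq mult.commute)
  moreover have "closed {y. N y \<le> 1}"
    by (rule closed_Collect_le[OF is_norm_continuous_on[OF assms] continuous_on_const])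
  ultimately show "compact {y. N y \<le> 1}"
    by (simp add: compact_eq_bounded_closed)
  show "convex {y. N y \<le> 1}"
  proof (rule convexI)
    fix x y :: 'a and u v :: real
    assume "x \<in> {y. N y \<le> 1}" "y \<in> {y. N y \<le> 1}" "0 \<le> u" "0 \<le> v" "u + v = 1"
    then have "u * N x + v * N y \<le> 1"
      by (metis add_mono mult_left_mono mult.right_neutral mem_Collect_eq)
    then show "u *\<^sub>R x + v *\<^sub>R y \<in> {y. N y \<le> 1}"
      using is_norm_triangle[OF assms, of "u *\<^sub>R x" "v *\<^sub>R y"] \<open>0 \<le> u\<close> \<open>0 \<le> v\<close>
      by (simp add: is_norm_scaleR[OF assms])
  qed
qed

section \<open>Polyhedral norms and the duality map\<close>

text \<open>Unlike the usual notion of a norming set, the norm of every vector must be attained,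
  not merely approximated.\<close>
definition norming_set :: "('a::real_vector \<Rightarrow> real) \<Rightarrow> ('a \<Rightarrow> real) set \<Rightarrow> bool" where
  "norming_set N \<Psi> \<longleftrightarrow> \<Psi> \<subseteq> dual_ball N \<and> (\<forall>x. \<exists>\<psi>\<in>\<Psi>. \<psi> x = N x)"

lemma dual_ball_linear: "\<phi> \<in> dual_ball N \<Longrightarrow> linear \<phi>"
  unfolding dual_ball_def by auto

lemma dual_ball_le: "\<phi> \<in> dual_ball N \<Longrightarrow> \<phi> x \<le> N x"
  unfolding dual_ball_def by (auto dest: abs_le_D1)

lemma ex_gt_1_scaled_less:
  fixes c b :: "'a \<Rightarrow> real"
  assumes "finite H" and "\<And>p. p \<in> H \<Longrightarrow> c p < b p"
  shows "\<exists>l>1. \<forall>p\<in>H. l * c p < b p"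
proof -
  have "\<forall>\<^sub>F l in at_right 1. \<forall>p\<in>H. l * c p < b p"
  proof (rule eventually_ball_finite[OF \<open>finite H\<close>], rule ballI)
    fix p assume "p \<in> H"
    have "((\<lambda>l. l * c p) \<longlongrightarrow> 1 * c p) (at_right 1)"
      by (intro tendsto_intros)
    then show "\<forall>\<^sub>F l in at_right 1. l * c p < b p"
      using assms(2)[OF \<open>p \<in> H\<close>] by (simp add: order_tendstoD(2))
  qed
  then have "\<forall>\<^sub>F l in at_right (1::real). 1 < l \<and> (\<forall>p\<in>H. l * c p < b p)"
    by (intro eventually_conj eventually_at_right_less)
  then show ?thesis
    by (auto dest: eventually_happens simp: trivial_limit_at_right_real)
qed

lemma unit_ball_halfspace_functional:
  fixes N :: "'a::euclidean_space \<Rightarrow> real"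
  assumes N: "is_norm N" and ball: "{y. N y \<le> 1} = {x. \<forall>(a, b)\<in>H. a \<bullet> x \<le> b}"
    and "(a, b) \<in> H" and "a \<noteq> 0"
  shows "b > 0" and "(\<lambda>y. (a \<bullet> y) / b) \<in> dual_ball N"
proof -
  have in_ball: "N y \<le> 1 \<Longrightarrow> a \<bullet> y \<le> b" for y
    using ball \<open>(a, b) \<in> H\<close> by blast
  define r where "r = 1 / (N a + 1)"
  have "r > 0" "N (r *\<^sub>R a) \<le> 1"
    using is_norm_nonneg[OF N, of a] by (simp_all add: r_def is_norm_scaleR[OF N] field_simps)
  then have "r * (a \<bullet> a) \<le> b" "0 < r * (a \<bullet> a)"
    using in_ball[of "r *\<^sub>R a"] \<open>a \<noteq> 0\<close> by simp_all
  then show "b > 0"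
    by linarith
  have le: "(a \<bullet> y) / b \<le> N y" for y
  proof (cases "y = 0")
    case False
    have "a \<bullet> (y /\<^sub>R N y) \<le> b"
      using in_ball[of "y /\<^sub>R N y"] is_norm_normalize[OF N False] by simp
    then show ?thesis
      using \<open>b > 0\<close> is_norm_pos[OF N False] by (simp add: field_simps)
  qed (simp add: is_norm_zero[OF N])
  have "linear (\<lambda>y. (a \<bullet> y) / b)"
    by (rule linearI) (simp_all add: inner_add_right add_divide_distrib)
  moreover have "\<bar>(a \<bullet> y) / b\<bar> \<le> N y" for y
    using le[of y] le[of "- y"] is_norm_minus[OF N, of y] by simp
  ultimately show "(\<lambda>y. (a \<bullet> y) / b) \<in> dual_ball N"
    unfolding dual_ball_def by blast
qed

lemma unit_ball_halfspace_attained: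
  fixes N :: "'a::euclidean_space \<Rightarrow> real"
  assumes N: "is_norm N" and "finite H" and ball: "{y. N y \<le> 1} = {x. \<forall>(a, b)\<in>H. a \<bullet> x \<le> b}"
    and "N z = 1"
  shows "\<exists>(a, b)\<in>H. a \<bullet> z = b"
proof (rule ccontr)
  assume not_attained: "\<not> ?thesis"
  have in_ball: "N y \<le> 1 \<longleftrightarrow> (\<forall>(a, b)\<in>H. a \<bullet> y \<le> b)" for y
    using ball by (simp add: set_eq_iff)
  have lt: "fst p \<bullet> z < snd p" if "p \<in> H" for p
  proof -
    have "fst p \<bullet> z \<le> snd p"
      using in_ball[of z] \<open>N z = 1\<close> that by (cases p) auto
    moreover have "fst p \<bullet> z \<noteq> snd p"
      using not_attained that by (cases p) auto
    ultimately show ?thesis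
      by simp
  qed
  obtain l :: real where "l > 1" and l: "\<forall>p\<in>H. l * (fst p \<bullet> z) < snd p"
    using ex_gt_1_scaled_less[where c = "\<lambda>p. fst p \<bullet> z" and b = snd, OF \<open>finite H\<close> lt] by blast
  have "\<forall>(a, b)\<in>H. a \<bullet> (l *\<^sub>R z) \<le> b"
    using l by (auto intro: less_imp_le)
  then have "N (l *\<^sub>R z) \<le> 1"
    using in_ball by blast
  then show False
    using \<open>l > 1\<close> \<open>N z = 1\<close> by (simp add: is_norm_scaleR[OF N])
qed

lemma norming_set_of_halfspaces:
  fixes N :: "'a::euclidean_space \<Rightarrow> real"
  assumes N: "is_norm N" and "finite H" and H: "\<forall>(a, b)\<in>H. a \<noteq> 0"
    and ball: "{y. N y \<le> 1} = {x. \<forall>(a, b)\<in>H. a \<bullet> x \<le> b}"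
  shows "norming_set N ((\<lambda>(a, b) y. (a \<bullet> y) / b) ` H)"
  unfolding norming_set_def
proof (intro conjI allI subsetI)
  have functional: "b > 0" "(\<lambda>y. (a \<bullet> y) / b) \<in> dual_ball N" if "(a, b) \<in> H" for a b
    using unit_ball_halfspace_functional[OF N ball that] H that by auto
  show "\<psi> \<in> dual_ball N" if \<psi>: "\<psi> \<in> (\<lambda>(a, b) y. (a \<bullet> y) / b) ` H" for \<psi>
  proof -
    obtain a b where "(a, b) \<in> H" and "\<psi> = (\<lambda>y. (a \<bullet> y) / b)"
      using \<psi> by auto
    then show ?thesis
      using functional(2) by simp
  qed
  fix x
  have "\<exists>(a, b)\<in>H. (a \<bullet> x) / b = N x"
  proof (cases "x = 0")
    case True
    have "H \<noteq> {}"
    proof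
      assume "H = {}"
      then have "{y. N y \<le> 1} = UNIV"
        using ball by simp
      then show False
        using compact_imp_bounded[OF is_norm_unit_ball(1)[OF N]] not_bounded_UNIV by metis
    qed
    then show ?thesis
      using True by (auto simp: is_norm_zero[OF N])
  next
    case False
    obtain a b where "(a, b) \<in> H" and "a \<bullet> (x /\<^sub>R N x) = b"
      using unit_ball_halfspace_attained[OF N \<open>finite H\<close> ball is_norm_normalize[OF N False]] by blast
    moreover have "b > 0"
      using functional(1)[OF \<open>(a, b) \<in> H\<close>] .
    ultimately have "(a \<bullet> x) / b = N x"
      using is_norm_pos[OF N False] by (simp add: field_simps)
    then show ?thesis
      using \<open>(a, b) \<in> H\<close> by blast
  qed
  then obtain a b where "(a, b) \<in> H" and "(a \<bullet> x) / b = N x"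
    by blast
  show "\<exists>\<psi>\<in>(\<lambda>(a, b) y. (a \<bullet> y) / b) ` H. \<psi> x = N x"
  proof (rule bexI)
    show "(\<lambda>y. (a \<bullet> y) / b) x = N x"
      using \<open>(a \<bullet> x) / b = N x\<close> by simp
    show "(\<lambda>y. (a \<bullet> y) / b) \<in> (\<lambda>(a, b) y. (a \<bullet> y) / b) ` H"
      using \<open>(a, b) \<in> H\<close> by (rule rev_image_eqI) simp
  qed
qed

lemma polyhedral_norm_norming_set:
  fixes N :: "'a::euclidean_space \<Rightarrow> real"
  assumes "polyhedral_norm N"
  shows "\<exists>\<Psi>. finite \<Psi> \<and> norming_set N \<Psi>"
proof -
  have N: "is_norm N" and "finite {x. x extreme_point_of {y. N y \<le> 1}}"
    using assms unfolding polyhedral_norm_def by auto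
  then have "polytope {y. N y \<le> 1}"
    unfolding polytope_def using Krein_Milman_Minkowski[OF is_norm_unit_ball[OF N]] by blast
  then have "polyhedron {y. N y \<le> 1}"
    by (rule polytope_imp_polyhedron)
  then obtain F where "finite F" and ball: "{y. N y \<le> 1} = \<Inter>F"
    and "\<forall>h\<in>F. \<exists>a b. a \<noteq> 0 \<and> h = {x. a \<bullet> x \<le> b}"
    unfolding polyhedron_def by blast
  then obtain a b where ab: "\<And>h. h \<in> F \<Longrightarrow> a h \<noteq> 0 \<and> h = {x. a h \<bullet> x \<le> b h}"
    by metis
  define H where "H = (\<lambda>h. (a h, b h)) ` F"
  have "finite H"
    unfolding H_def using \<open>finite F\<close> by (rule finite_imageI)
  have H: "\<forall>(a, b)\<in>H. a \<noteq> 0"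
    using ab unfolding H_def by auto
  have "{y. N y \<le> 1} = {x. \<forall>(a, b)\<in>H. a \<bullet> x \<le> b}"
    unfolding ball H_def using ab by blast
  then have "norming_set N ((\<lambda>(a, b) y. (a \<bullet> y) / b) ` H)"
    by (rule norming_set_of_halfspaces[OF N \<open>finite H\<close> H])
  moreover have "finite ((\<lambda>(a, b) y. (a \<bullet> y) / b) ` H)"
    using \<open>finite H\<close> by (rule finite_imageI)
  ultimately show ?thesis
    by blast
qed

text \<open>The only use of finiteness of the norming set: \<delta> is half the smallest gap \<open>N u - \<psi> u\<close>
  over the finitely many functionals of the norming set that do not attain the norm at \<open>u\<close>,
  so a functional attaining the norm at \<open>u + h\<close> must already attain it at \<open>u\<close>.\<close>
lemma duality_map_locally_stable:
  fixes N :: "'a::real_vector \<Rightarrow> real"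
  assumes N: "is_norm N" and "finite \<Psi>" and \<Psi>: "norming_set N \<Psi>"
  shows "\<exists>\<delta>>0. \<forall>h. N h < \<delta> \<longrightarrow> (\<exists>\<psi>\<in>duality_map N u. \<psi> (u + h) = N (u + h))"
proof -
  define G where "G = insert 1 ((\<lambda>\<psi>. N u - \<psi> u) ` {\<psi>\<in>\<Psi>. \<psi> u < N u})"
  have "finite G" "G \<noteq> {}" and "\<forall>g\<in>G. g > 0"
    using \<open>finite \<Psi>\<close> unfolding G_def by auto
  then have "Min G / 2 > 0"
    by (simp add: Min_gr_iff)
  moreover have "\<exists>\<psi>\<in>duality_map N u. \<psi> (u + h) = N (u + h)" if h: "N h < Min G / 2" for h
  proof -
    obtain \<psi> where "\<psi> \<in> \<Psi>" and \<psi>: "\<psi> (u + h) = N (u + h)"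
      using \<Psi> unfolding norming_set_def by blast
    then have dual: "\<psi> \<in> dual_ball N"
      using \<Psi> unfolding norming_set_def by blast
    have "\<psi> u = N u"
    proof (rule ccontr)
      assume "\<psi> u \<noteq> N u"
      then have "\<psi> u < N u"
        using dual_ball_le[OF dual, of u] by simp
      then have "N u - \<psi> u \<in> G"
        using \<open>\<psi> \<in> \<Psi>\<close> unfolding G_def by blast
      then have "Min G \<le> N u - \<psi> u"
        by (rule Min_le[OF \<open>finite G\<close>])
      moreover have "\<psi> (u + h) = \<psi> u + \<psi> h"
        using linear_add[OF dual_ball_linear[OF dual]] .
      moreover have "\<psi> h \<le> N h"
        using dual_ball_le[OF dual] .
      moreover have "N u - N h \<le> N (u + h)"
        using is_norm_diff_le[OF N, of "u + h" h] is_norm_triangle[OF N, of "u + h" "- h"]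
          is_norm_minus[OF N, of h] by simp
      ultimately show False
        using \<psi> h is_norm_nonneg[OF N, of h] by linarith
    qed
    then show ?thesis
      using dual \<psi> unfolding duality_map_def by blast
  qed
  ultimately show ?thesis
    by blast
qed

lemma subspace_L_set:
  assumes lin: "\<And>\<phi>. \<phi> \<in> E \<Longrightarrow> linear \<phi>"
  shows "subspace (L_set E)"
proof (rule subspaceI)
  show "0 \<in> L_set E"
    using lin by (simp add: L_set_def linear_0)
  show "x + y \<in> L_set E" if "x \<in> L_set E" "y \<in> L_set E" for x y
    unfolding L_set_def
  proof (intro CollectI ballI)
    fix \<phi> \<psi> assume "\<phi> \<in> E" "\<psi> \<in> E"
    then have "\<phi> x = \<psi> x" "\<phi> y = \<psi> y"
      using that unfolding L_set_def by blast+
    then show "\<phi> (x + y) = \<psi> (x + y)"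
      using lin[OF \<open>\<phi> \<in> E\<close>] lin[OF \<open>\<psi> \<in> E\<close>] by (simp add: linear_add)
  qed
  show "c *\<^sub>R x \<in> L_set E" if "x \<in> L_set E" for c x
    unfolding L_set_def
  proof (intro CollectI ballI)
    fix \<phi> \<psi> assume "\<phi> \<in> E" "\<psi> \<in> E"
    then have "\<phi> x = \<psi> x"
      using that unfolding L_set_def by blast
    then show "\<phi> (c *\<^sub>R x) = \<psi> (c *\<^sub>R x)"
      using lin[OF \<open>\<phi> \<in> E\<close>] lin[OF \<open>\<psi> \<in> E\<close>] by (simp add: linear_scale)
  qed
qed

lemma mem_L_set_duality_map: "u \<in> L_set (duality_map N u)"
  unfolding L_set_def duality_map_def by simp

lemma nonexpansive_functional_squeeze:
  assumes "nonexpansive N f" and \<phi>: "\<phi> \<in> dual_ball N"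
    and "\<phi> (f v) = \<phi> v" "\<phi> (f w) = \<phi> w"
    and "\<phi> (x - w) = N (x - w)" "\<phi> (v - x) = N (v - x)"
  shows "\<phi> (f x) = \<phi> x"
proof -
  have "\<phi> (f x - f w) \<le> N (x - w)" "\<phi> (f v - f x) \<le> N (v - x)"
    using assms(1) dual_ball_le[OF \<phi>] unfolding nonexpansive_def by (meson order_trans)+
  then show ?thesis
    using assms(3-6) linear_diff[OF dual_ball_linear[OF \<phi>]] by simp
qed

lemma S_set_near_midpoint:
  fixes N :: "'a::real_vector \<Rightarrow> real"
  assumes N: "is_norm N" and "finite \<Psi>" "norming_set N \<Psi>" and "nonexpansive N f"
    and "v \<in> S_set E f" "w \<in> S_set E f" and E: "duality_map N (v - w) = E"
  shows "\<exists>\<delta>>0. \<forall>l\<in>L_set E. N l < \<delta> \<longrightarrow> midpoint w v + l \<in> S_set E f"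
proof -
  define u where "u = v - w"
  have Eu: "E = duality_map N u"
    using E unfolding u_def by simp
  obtain \<delta> where "\<delta> > 0"
    and \<delta>: "\<And>h. N h < \<delta> \<Longrightarrow> \<exists>\<psi>\<in>E. \<psi> (u + h) = N (u + h)"
    using duality_map_locally_stable[OF N \<open>finite \<Psi>\<close> \<open>norming_set N \<Psi>\<close>, of u]
    unfolding Eu by blast
  have dual: "\<phi> \<in> dual_ball N" if "\<phi> \<in> E" for \<phi>
    using that unfolding Eu duality_map_def by simp
  have L: "subspace (L_set E)"
    by (rule subspace_L_set) (rule dual_ball_linear[OF dual])
  have "u \<in> L_set E"
    unfolding Eu by (rule mem_L_set_duality_map)
  have attains: "\<phi> (u + c *\<^sub>R l) = N (u + c *\<^sub>R l)"
    if "\<phi> \<in> E" and l: "l \<in> L_set E" and small: "\<bar>c\<bar> * N l < \<delta>" for \<phi> l c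
  proof -
    obtain \<psi> where "\<psi> \<in> E" and \<psi>: "\<psi> (u + c *\<^sub>R l) = N (u + c *\<^sub>R l)"
      using \<delta>[of "c *\<^sub>R l"] small by (auto simp: is_norm_scaleR[OF N])
    have "u + c *\<^sub>R l \<in> L_set E"
      using L \<open>u \<in> L_set E\<close> l by (intro subspace_add subspace_scale)
    then have "\<phi> (u + c *\<^sub>R l) = \<psi> (u + c *\<^sub>R l)"
      using \<open>\<phi> \<in> E\<close> \<open>\<psi> \<in> E\<close> unfolding L_set_def by blast
    with \<psi> show ?thesis
      by simp
  qed
  have "midpoint w v + l \<in> S_set E f" if "l \<in> L_set E" "N l < \<delta> / 2" for l
    unfolding S_set_def
  proof (intro CollectI ballI)
    fix \<phi> assume "\<phi> \<in> E"
    define x where "x = midpoint w v + l"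
    have "x - w = (1/2) *\<^sub>R (u + 2 *\<^sub>R l)" "v - x = (1/2) *\<^sub>R (u + (-2) *\<^sub>R l)"
      unfolding x_def u_def midpoint_def
      by (simp_all add: algebra_simps) (simp_all flip: scaleR_add_left)
    then have "\<phi> (x - w) = N (x - w)" "\<phi> (v - x) = N (v - x)"
      using attains[OF \<open>\<phi> \<in> E\<close> \<open>l \<in> L_set E\<close>, of 2] attains[OF \<open>\<phi> \<in> E\<close> \<open>l \<in> L_set E\<close>, of "-2"]
        that(2) linear_scale[OF dual_ball_linear[OF dual[OF \<open>\<phi> \<in> E\<close>]]]
      by (simp_all add: is_norm_scaleR[OF N])
    moreover have "\<phi> (f v) = \<phi> v" "\<phi> (f w) = \<phi> w"
      using assms(5,6) \<open>\<phi> \<in> E\<close> unfolding S_set_def by auto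
    ultimately show "\<phi> (f (midpoint w v + l)) = \<phi> (midpoint w v + l)"
      using nonexpansive_functional_squeeze[OF \<open>nonexpansive N f\<close> dual[OF \<open>\<phi> \<in> E\<close>]]
      unfolding x_def by blast
  qed
  then show ?thesis
    using \<open>\<delta> > 0\<close> by (intro exI[of _ "\<delta> / 2"]) auto
qed

section \<open>Real analytic functions of one variable\<close>

definition local_power_series :: "(real \<Rightarrow> real) \<Rightarrow> bool" where
  "local_power_series g \<longleftrightarrow>
     (\<forall>t0. \<exists>\<rho>>0. \<exists>a. \<forall>t\<in>ball t0 \<rho>. (\<lambda>k. a k * (t - t0) ^ k) sums g t)"

lemma local_power_series_diff:
  assumes "local_power_series g" and "local_power_series h"
  shows "local_power_series (\<lambda>t. g t - h t)"
  unfolding local_power_series_def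
proof
  fix t0
  obtain \<rho>1 a where "\<rho>1 > 0" and a: "\<And>t. t \<in> ball t0 \<rho>1 \<Longrightarrow> (\<lambda>k. a k * (t - t0) ^ k) sums g t"
    using assms(1) unfolding local_power_series_def by blast
  obtain \<rho>2 b where "\<rho>2 > 0" and b: "\<And>t. t \<in> ball t0 \<rho>2 \<Longrightarrow> (\<lambda>k. b k * (t - t0) ^ k) sums h t"
    using assms(2) unfolding local_power_series_def by blast
  show "\<exists>\<rho>>0. \<exists>c. \<forall>t\<in>ball t0 \<rho>. (\<lambda>k. c k * (t - t0) ^ k) sums (g t - h t)"
  proof (intro exI conjI)
    show "min \<rho>1 \<rho>2 > 0"
      using \<open>\<rho>1 > 0\<close> \<open>\<rho>2 > 0\<close> by simp
    show "\<forall>t\<in>ball t0 (min \<rho>1 \<rho>2). (\<lambda>k. (a k - b k) * (t - t0) ^ k) sums (g t - h t)"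
      using sums_diff[OF a b] by (simp add: left_diff_distrib)
  qed
qed

lemma local_power_series_affine: "local_power_series (\<lambda>t. c + d * t)"
  unfolding local_power_series_def
proof
  fix t0
  define a where "a k = (if k = 0 then c + d * t0 else if k = 1 then d else 0)" for k :: nat
  have "(\<lambda>k. a k * (t - t0) ^ k) sums (\<Sum>k\<in>{0, 1}. a k * (t - t0) ^ k)" for t
    by (rule sums_finite) (auto simp: a_def)
  moreover have "(\<Sum>k\<in>{0, 1}. a k * (t - t0) ^ k) = c + d * t" for t
    by (simp add: a_def algebra_simps)
  ultimately have sums: "(\<lambda>k. a k * (t - t0) ^ k) sums (c + d * t)" for t
    by simp
  show "\<exists>\<rho>>0. \<exists>a. \<forall>t\<in>ball t0 \<rho>. (\<lambda>k. a k * (t - t0) ^ k) sums (c + d * t)"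
  proof (intro exI conjI)
    show "(1::real) > 0"
      by simp
    show "\<forall>t\<in>ball t0 1. (\<lambda>k. a k * (t - t0) ^ k) sums (c + d * t)"
      using sums by blast
  qed
qed

text \<open>Abel's lemma: convergence on the real interval already gives convergence on the complex
  disc of the same radius.\<close>
lemma real_power_series_holomorphic:
  fixes a :: "nat \<Rightarrow> real"
  assumes "\<And>t. t \<in> ball t0 \<rho> \<Longrightarrow> summable (\<lambda>k. a k * (t - t0) ^ k)"
  shows "(\<lambda>z. \<Sum>k. of_real (a k) * (z - of_real t0) ^ k) holomorphic_on ball (of_real t0) \<rho>"
proof (rule power_series_holomorphic)
  fix z assume "z \<in> ball (complex_of_real t0) \<rho>"
  then have "norm (z - of_real t0) < \<rho>"
    by (simp add: dist_norm norm_minus_commute)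
  define s where "s = (norm (z - of_real t0) + \<rho>) / 2"
  have "norm (z - of_real t0) < s" and "s < \<rho>"
    using \<open>norm (z - of_real t0) < \<rho>\<close> by (simp_all add: s_def)
  then have "0 \<le> s"
    by (meson norm_ge_zero order_trans less_imp_le)
  then have "summable (\<lambda>k. a k * s ^ k)"
    using assms[of "t0 + s"] \<open>s < \<rho>\<close> by (simp add: dist_real_def)
  then have "summable (\<lambda>k. of_real (a k) * (of_real s :: complex) ^ k)"
    by (simp flip: of_real_power of_real_mult)
  then have "summable (\<lambda>k. of_real (a k) * (z - of_real t0) ^ k)"
    by (rule powser_inside) (use \<open>norm (z - of_real t0) < s\<close> in simp)
  then show "(\<lambda>k. of_real (a k) * (z - of_real t0) ^ k) sums (\<Sum>k. of_real (a k) * (z - of_real t0) ^ k)"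
    by (rule summable_sums)
qed

text \<open>The complex identity theorem, applied to the holomorphic extension on the disc.\<close>
lemma real_power_series_eq_0:
  fixes a :: "nat \<Rightarrow> real"
  assumes g: "\<And>t. t \<in> ball t0 \<rho> \<Longrightarrow> (\<lambda>k. a k * (t - t0) ^ k) sums g t"
    and "t1 \<in> ball t0 \<rho>" and "t1 \<in> interior {t. g t = 0}" and "t \<in> ball t0 \<rho>"
  shows "g t = 0"
proof -
  define h where "h z = (\<Sum>k. of_real (a k) * (z - of_real t0) ^ k)" for z :: complex
  have "summable (\<lambda>k. a k * (t - t0) ^ k)" if "t \<in> ball t0 \<rho>" for t
    using g[OF that] by (rule sums_summable)
  then have hol: "h holomorphic_on ball (of_real t0) \<rho>"
    unfolding h_def by (rule real_power_series_holomorphic)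
  have h_real: "h (of_real s) = of_real (g s)" if "s \<in> ball t0 \<rho>" for s
  proof -
    have "(\<lambda>k. of_real (a k) * (of_real s - of_real t0) ^ k) sums (complex_of_real (g s))"
      using sums_of_real[OF g[OF that]] by simp
    then show ?thesis
      unfolding h_def by (simp add: sums_iff)
  qed
  define U where "U = interior {t. g t = 0} \<inter> ball t0 \<rho>"
  have "t1 islimpt U"
    using assms(2,3) unfolding U_def by (intro interior_limit_point) (simp add: interior_open)
  moreover have "isCont complex_of_real t1"
    by (rule linear_continuous_at[OF bounded_linear_of_real])
  moreover have "\<forall>\<^sub>F s in at t1. complex_of_real s \<noteq> of_real t1"
    by (simp add: eventually_at_filter)
  ultimately have lim: "complex_of_real t1 islimpt of_real ` U"
    by (rule islimpt_isCont_image)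
  have zero: "h z = 0" if z: "z \<in> of_real ` U" for z
  proof -
    obtain s where "z = of_real s" "s \<in> U"
      using z by blast
    then show ?thesis
      using h_real interior_subset unfolding U_def by auto
  qed
  have sub: "complex_of_real ` U \<subseteq> ball (of_real t0) \<rho>"
    unfolding U_def by auto
  have "h (of_real t) = 0"
    by (rule analytic_continuation[OF hol open_ball connected_ball sub _ lim zero])
       (use assms(2,4) in simp_all)
  then show ?thesis
    using h_real[OF assms(4)] by simp
qed

lemma local_power_series_eq_0:
  assumes "local_power_series g" and "interior {t. g t = 0} \<noteq> {}"
  shows "g t = 0"
proof -
  define Z where "Z = interior {t. g t = 0}"
  have "closed Z"
    unfolding closed_limpt
  proof (intro allI impI)
    fix t0 assume "t0 islimpt Z"
    obtain \<rho> a where "\<rho> > 0" and a: "\<And>t. t \<in> ball t0 \<rho> \<Longrightarrow> (\<lambda>k. a k * (t - t0) ^ k) sums g t"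
      using assms(1) unfolding local_power_series_def by blast
    obtain t1 where "t1 \<in> Z" and "dist t1 t0 < \<rho>"
      using \<open>t0 islimpt Z\<close> \<open>\<rho> > 0\<close> unfolding islimpt_approachable by blast
    then have "ball t0 \<rho> \<subseteq> {t. g t = 0}"
      using real_power_series_eq_0[OF a] unfolding Z_def by (simp add: dist_commute subset_eq)
    then show "t0 \<in> Z"
      unfolding Z_def mem_interior using \<open>\<rho> > 0\<close> by blast
  qed
  then have "Z = UNIV"
    using clopen[of Z] open_interior assms(2) unfolding Z_def by blast
  then show ?thesis
    using interior_subset unfolding Z_def by blast
qed

section \<open>Real analytic maps restricted to lines\<close>

definition multi_degree :: "('n::finite \<Rightarrow> nat) \<Rightarrow> nat" where
  "multi_degree \<alpha> = (\<Sum>i\<in>UNIV. \<alpha> i)"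

lemma finite_multi_degree_eq: "finite {\<alpha> :: 'n::finite \<Rightarrow> nat. multi_degree \<alpha> = k}"
proof (rule finite_subset)
  show "{\<alpha> :: 'n \<Rightarrow> nat. multi_degree \<alpha> = k} \<subseteq> PiE UNIV (\<lambda>_. {..k})"
    by (auto simp: multi_degree_def PiE_UNIV_domain intro!: member_le_sum)
  show "finite (PiE (UNIV :: 'n set) (\<lambda>_. {..k}))"
    by (rule finite_PiE) auto
qed

lemma has_sum_imp_sums_by_multi_degree:
  fixes F :: "('n::finite \<Rightarrow> nat) \<Rightarrow> 'a::{topological_comm_monoid_add, t3_space}"
  assumes "(F has_sum S) UNIV"
  shows "(\<lambda>k. \<Sum>\<alpha> | multi_degree \<alpha> = k. F \<alpha>) sums S"
proof -
  define D where "D k = {\<alpha> :: 'n \<Rightarrow> nat. multi_degree \<alpha> = k}" for k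
  have "bij_betw (\<lambda>\<alpha>. (multi_degree \<alpha>, \<alpha>)) UNIV (Sigma UNIV D)"
    by (auto simp: bij_betw_def inj_on_def D_def image_iff)
  then have "((\<lambda>(k, \<alpha>). F \<alpha>) has_sum S) (Sigma UNIV D)"
    using assms by (simp add: has_sum_reindex_bij_betw[symmetric])
  then have "((\<lambda>k. \<Sum>\<alpha>\<in>D k. F \<alpha>) has_sum S) UNIV"
    by (rule has_sum_SigmaD) (auto intro: has_sum_finite simp: D_def finite_multi_degree_eq)
  then show ?thesis
    unfolding D_def by (rule has_sum_imp_sums)
qed

lemma real_analytic_restrict_line:
  fixes f :: "real^'n \<Rightarrow> real^'n" and \<phi> :: "real^'n \<Rightarrow> real"
  assumes "real_analytic f" and "linear \<phi>"
  shows "local_power_series (\<lambda>t. \<phi> (f (x0 + t *\<^sub>R m)))"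
  unfolding local_power_series_def
proof
  fix t0
  define y0 where "y0 = x0 + t0 *\<^sub>R m"
  obtain r c where "r > 0" and c: "\<And>y. dist y y0 < r \<Longrightarrow>
     ((\<lambda>\<alpha>. (\<Prod>i\<in>UNIV. (y$i - y0$i) ^ \<alpha> i) *\<^sub>R c \<alpha>) has_sum f y) UNIV"
    using assms(1) unfolding real_analytic_def by meson
  define \<rho> where "\<rho> = r / (norm m + 1)"
  have "norm m + 1 > 0"
    using norm_ge_zero[of m] by linarith
  define d where "d \<alpha> = \<phi> ((\<Prod>i\<in>UNIV. m$i ^ \<alpha> i) *\<^sub>R c \<alpha>)" for \<alpha>
  define a where "a k = (\<Sum>\<alpha> | multi_degree \<alpha> = k. d \<alpha>)" for k
  have sums: "(\<lambda>k. a k * (t - t0) ^ k) sums \<phi> (f (x0 + t *\<^sub>R m))" if "t \<in> ball t0 \<rho>" for t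
  proof -
    define y where "y = x0 + t *\<^sub>R m"
    have "\<bar>t - t0\<bar> * norm m < r"
    proof -
      have "\<bar>t - t0\<bar> * norm m \<le> \<bar>t - t0\<bar> * (norm m + 1)"
        by (simp add: mult_left_mono)
      also have "\<dots> < r"
        using that \<open>norm m + 1 > 0\<close>
        by (simp add: \<rho>_def dist_real_def abs_minus_commute pos_less_divide_eq)
      finally show ?thesis .
    qed
    then have "dist y y0 < r"
      by (simp add: y_def y0_def dist_norm flip: scaleR_diff_left)
    from has_sum_bounded_linear[OF linear_conv_bounded_linear[THEN iffD1, OF assms(2)] c[OF this]]
    have "((\<lambda>\<alpha>. \<phi> ((\<Prod>i\<in>UNIV. (y$i - y0$i) ^ \<alpha> i) *\<^sub>R c \<alpha>)) has_sum \<phi> (f y)) UNIV" .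
    moreover have "(\<Prod>i\<in>UNIV. (y$i - y0$i) ^ \<alpha> i) = (t - t0) ^ multi_degree \<alpha> * (\<Prod>i\<in>UNIV. m$i ^ \<alpha> i)"
      for \<alpha>
    proof -
      have "y - y0 = (t - t0) *\<^sub>R m"
        by (simp add: y_def y0_def algebra_simps)
      then have "(\<Prod>i\<in>UNIV. (y$i - y0$i) ^ \<alpha> i) = (\<Prod>i\<in>UNIV. (t - t0) ^ \<alpha> i * m$i ^ \<alpha> i)"
        by (simp flip: vector_minus_component add: power_mult_distrib)
      then show ?thesis
        by (simp add: prod.distrib power_sum multi_degree_def)
    qed
    ultimately have "((\<lambda>\<alpha>. (t - t0) ^ multi_degree \<alpha> * d \<alpha>) has_sum \<phi> (f y)) UNIV"
      by (simp add: d_def linear_scale[OF assms(2)] mult.assoc)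
    then have "(\<lambda>k. \<Sum>\<alpha> | multi_degree \<alpha> = k. (t - t0) ^ multi_degree \<alpha> * d \<alpha>) sums \<phi> (f y)"
      by (rule has_sum_imp_sums_by_multi_degree)
    moreover have "(\<Sum>\<alpha> | multi_degree \<alpha> = k. (t - t0) ^ multi_degree \<alpha> * d \<alpha>) = a k * (t - t0) ^ k"
      for k
      unfolding a_def sum_distrib_right by (rule sum.cong) auto
    ultimately show ?thesis
      unfolding y_def by simp
  qed
  show "\<exists>\<rho>>0. \<exists>a. \<forall>t\<in>ball t0 \<rho>. (\<lambda>k. a k * (t - t0) ^ k) sums \<phi> (f (x0 + t *\<^sub>R m))"
  proof (intro exI conjI)
    show "\<rho> > 0"
      using \<open>r > 0\<close> \<open>norm m + 1 > 0\<close> by (simp add: \<rho>_def)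
    show "\<forall>t\<in>ball t0 \<rho>. (\<lambda>k. a k * (t - t0) ^ k) sums \<phi> (f (x0 + t *\<^sub>R m))"
      using sums by blast
  qed
qed

lemma S_set_line_real_analytic:
  fixes f :: "real^'n \<Rightarrow> real^'n"
  assumes "real_analytic f" and lin: "\<And>\<phi>. \<phi> \<in> E \<Longrightarrow> linear \<phi>"
    and "\<epsilon> > 0" and near: "\<And>s. \<bar>s\<bar> < \<epsilon> \<Longrightarrow> x0 + s *\<^sub>R m \<in> S_set E f"
  shows "x0 + t *\<^sub>R m \<in> S_set E f"
  unfolding S_set_def
proof (intro CollectI ballI)
  fix \<phi> assume "\<phi> \<in> E"
  define g where "g s = \<phi> (f (x0 + s *\<^sub>R m)) - (\<phi> x0 + \<phi> m * s)" for s
  have "local_power_series g"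
    unfolding g_def
    by (intro local_power_series_diff local_power_series_affine
        real_analytic_restrict_line[OF assms(1) lin[OF \<open>\<phi> \<in> E\<close>]])
  have \<phi>_line: "\<phi> (x0 + s *\<^sub>R m) = \<phi> x0 + \<phi> m * s" for s
    using lin[OF \<open>\<phi> \<in> E\<close>] by (simp add: linear_add linear_scale)
  have "g s = 0" if "\<bar>s\<bar> < \<epsilon>" for s
    using near[OF that] \<open>\<phi> \<in> E\<close> unfolding S_set_def g_def \<phi>_line[symmetric] by simp
  then have "ball 0 \<epsilon> \<subseteq> {s. g s = 0}"
    by auto
  then have "0 \<in> interior {s. g s = 0}"
    using \<open>\<epsilon> > 0\<close> by (auto simp: mem_interior)
  then have "g t = 0"
    using local_power_series_eq_0[OF \<open>local_power_series g\<close>] by blast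
  then show "\<phi> (f (x0 + t *\<^sub>R m)) = \<phi> (x0 + t *\<^sub>R m)"
    by (simp add: g_def \<phi>_line)
qed

theorem lemma2p4:
  fixes N :: "real^'n \<Rightarrow> real" and f :: "real^'n \<Rightarrow> real^'n"
    and E :: "(real^'n \<Rightarrow> real) set" and v w :: "real^'n"
  assumes "polyhedral_norm N"
    and "nonexpansive N f"
    and "real_analytic f"
    and "E \<subseteq> dual_ball N"
    and "v \<in> S_set E f" and "w \<in> S_set E f"
    and "duality_map N (v - w) = E"
  shows "(\<lambda>l. w + l) ` L_set E \<subseteq> S_set E f"
proof
  fix x assume "x \<in> (\<lambda>l. w + l) ` L_set E"
  then obtain l where "l \<in> L_set E" and x: "x = w + l"
    by blast
  have N: "is_norm N"
    using assms(1) unfolding polyhedral_norm_def by blast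
  obtain \<Psi> where "finite \<Psi>" "norming_set N \<Psi>"
    using polyhedral_norm_norming_set[OF assms(1)] by blast
  obtain \<delta> where "\<delta> > 0" and \<delta>: "\<And>l. l \<in> L_set E \<Longrightarrow> N l < \<delta> \<Longrightarrow> midpoint w v + l \<in> S_set E f"
    using S_set_near_midpoint[OF N \<open>finite \<Psi>\<close> \<open>norming_set N \<Psi>\<close> assms(2,5,6,7)] by blast
  have lin: "\<And>\<phi>. \<phi> \<in> E \<Longrightarrow> linear \<phi>"
    using assms(4) dual_ball_linear by blast
  have L: "subspace (L_set E)"
    using subspace_L_set[OF lin] .
  define m where "m = l - (1/2) *\<^sub>R (v - w)"
  have "m \<in> L_set E"
    unfolding m_def using L \<open>l \<in> L_set E\<close> mem_L_set_duality_map[where u = "v - w" and N = N] assms(7)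
    by (simp add: subspace_diff subspace_scale)
  obtain \<epsilon> where "\<epsilon> > 0" and \<epsilon>: "\<And>s. \<bar>s\<bar> < \<epsilon> \<Longrightarrow> N (s *\<^sub>R m) < \<delta>"
    using is_norm_scaleR_small[OF N \<open>\<delta> > 0\<close>] by blast
  have "midpoint w v + s *\<^sub>R m \<in> S_set E f" if "\<bar>s\<bar> < \<epsilon>" for s
    using \<delta>[OF subspace_scale[OF L \<open>m \<in> L_set E\<close>] \<epsilon>[OF that]] .
  then have "midpoint w v + 1 *\<^sub>R m \<in> S_set E f"
    using S_set_line_real_analytic[OF assms(3) lin \<open>\<epsilon> > 0\<close>] by blast
  moreover have "midpoint w v + 1 *\<^sub>R m = x"
    unfolding m_def x midpoint_def by (simp add: scaleR_add_right scaleR_diff_right)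
  ultimately show "x \<in> S_set E f"
    by simp
qed

end
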